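(* Let $\lambda/\mu$ be an edgewise connected skew diagram whose boxes have contents $c_{\min}, c_{\min}+1,\ldots,c_{\max}$, and let $i$ be an integer with $c_{\min}\le i<c_{\max}$. Let $\Pi$ be an outside decomposition of $\lambda/\mu$, and let $\Pi'=\omega_i(\Pi)$ be the outside decomposition obtained from $\Pi$ by the twist transformation $\omega_i$. Then exactly one of the following holds: (a) $i\notin \mathrm{Term}(\Pi)$, $i+1\notin \mathrm{Init}(\Pi)$, $\mathrm{Init}(\Pi')=\mathrm{Init}(\Pi)\cup\{i+1\}$ and $\mathrm{Term}(\Pi')=\mathrm{Term}(\Pi)\cup\{i\}$; (b) $i\in \mathrm{Term}(\Pi)$, $i+1\in \mathrm{Init}(\Pi)$, $\mathrm{Init}(\Pi')=\mathrm{Init}(\Pi)\setminus\{i+1\}$ and $\mathrm{Term}(\Pi')=\mathrm{Term}(\Pi)\setminus\{i\}$; (c) $i\in \mathrm{Term}(\Pi)$, $i+1\notin \mathrm{Init}(\Pi)$, $\mathrm{Init}(\Pi')=\mathrm{Init}(\Pi)$ and $\mathrm{Term}(\Pi')=\mathrm{Term}(\Pi)$; (d) $i\notin \mathrm{Term}(\Pi)$, $i+1\in \mathrm{Init}(\Pi)$, $\mathrm{Init}(\Pi')=\mathrm{Init}(\Pi)$ and $\mathrm{Term}(\Pi')=\mathrm{Term}(\Pi)$.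
   Context: Diagrams use English convention: box $(r,c)$ is in row $r$ from the top and column $c$ from the left; its content is $c-r$. A skew diagram $\lambda/\mu$ ($\mu\subseteq\lambda$ partitions) is the set of boxes of $\lambda$ not in $\mu$; it is edgewise connected if its boxes are connected via shared edges. A border strip is an edgewise connected skew diagram containing no $2\times 2$ block of boxes; its boxes have consecutive contents, each box (except the last) being followed by the box of next content which lies either directly above it ("up") or directly to its right ("right"). An outside decomposition of $\lambda/\mu$ is a partition of its boxes into pairwise disjoint border strips such that each strip has its starting box (smallest content) on the left or bottom perimeter of the diagram and its ending box (largest content) on the right or top perimeter. For a strip $\theta$, $p(\theta)$ and $q(\theta)$ denote the contents of its initial and terminal boxes; for $\Pi=(\theta_1,\ldots,\theta_m)$, $\mathrm{Init}(\Pi)=\{p(\theta_1),\ldots,p(\theta_m)\}$ and $\mathrm{Term}(\Pi)=\{q(\theta_1),\ldots,q(\theta_m)\}$. Fact (Chen–Yan–Yang): for edgewise connected $\lambda/\mu$, outside decompositions $\Pi$ are in bijection with border strips $\phi$ with boxes of contents $c_{\min},\ldots,c_{\max}$ (the cutting strip of $\Pi$), where for each $j$ with $c_{\min}\le j<c_{\max}$, the box of content $j+1$ of $\phi$ lies above (resp. to the right of) the box of content $j$ of $\phi$ iff in every strip of $\Pi$ containing boxes of contents $j$ and $j+1$, the box of content $j+1$ lies above (resp. to the right of) the box of content $j$. The twist transformation $\omega_i$ maps $\Pi$ to the outside decomposition whose cutting strip is obtained from that of $\Pi$ by switching the relative position of its boxes of contents $i$ and $i+1$ (up $\leftrightarrow$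 right), keeping all other relative positions. *)

theory Defs
  imports Main
begin

(* Boxes are pairs (r, c) of integers: row r (from the top), column c (from the left).
   English convention; content of box (r,c) is c - r. *)
type_synonym box = "int \<times> int"

definition content :: "box \<Rightarrow> int" where
  "content b = snd b - fst b"

definition is_partition :: "nat list \<Rightarrow> bool" where
  "is_partition la \<longleftrightarrow> sorted_wrt (\<ge>) la"

definition part_row :: "nat list \<Rightarrow> int \<Rightarrow> int" where
  "part_row la r = (if 1 \<le> r \<and> r \<le> int (length la) then int (la ! nat (r - 1)) else 0)"

definition part_le :: "nat list \<Rightarrow> nat list \<Rightarrow> bool" where
  "part_le mu la \<longleftrightarrow> (\<forall>r. part_row mu r \<le> part_row la r)"

definition skew :: "nat list \<Rightarrow> nat list \<Rightarrow> box set" where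
  "skew la mu = {(r, c). 1 \<le> c \<and> part_row mu r < c \<and> c \<le> part_row la r}"

definition is_skew_diagram :: "box set \<Rightarrow> bool" where
  "is_skew_diagram S \<longleftrightarrow>
     (\<exists>la mu. is_partition la \<and> is_partition mu \<and> part_le mu la \<and> S = skew la mu)"

definition adjacent :: "box \<Rightarrow> box \<Rightarrow> bool" where
  "adjacent a b \<longleftrightarrow> \<bar>fst a - fst b\<bar> + \<bar>snd a - snd b\<bar> = 1"

definition edge_connected :: "box set \<Rightarrow> bool" where
  "edge_connected S \<longleftrightarrow>
     (\<forall>a\<in>S. \<forall>b\<in>S. (a, b) \<in> {(x, y). x \<in> S \<and> y \<in> S \<and> adjacent x y}\<^sup>*)"

definition no_2x2 :: "box set \<Rightarrow> bool" where
  "no_2x2 S \<longleftrightarrow>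
     \<not> (\<exists>r c. (r, c) \<in> S \<and> (r + 1, c) \<in> S \<and> (r, c + 1) \<in> S \<and> (r + 1, c + 1) \<in> S)"

definition border_strip :: "box set \<Rightarrow> bool" where
  "border_strip S \<longleftrightarrow> S \<noteq> {} \<and> is_skew_diagram S \<and> edge_connected S \<and> no_2x2 S"

definition pc :: "box set \<Rightarrow> int" where
  "pc S = Min (content ` S)"

definition qc :: "box set \<Rightarrow> int" where
  "qc S = Max (content ` S)"

definition on_left_or_bottom :: "box set \<Rightarrow> box \<Rightarrow> bool" where
  "on_left_or_bottom D b \<longleftrightarrow> (fst b, snd b - 1) \<notin> D \<or> (fst b + 1, snd b) \<notin> D"

definition on_right_or_top :: "box set \<Rightarrow> box \<Rightarrow> bool" where
  "on_right_or_top D b \<longleftrightarrow> (fst b, snd b + 1) \<notin> D \<or> (fst b - 1, snd b) \<notin> D"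

definition outside_decomp :: "box set \<Rightarrow> box set set \<Rightarrow> bool" where
  "outside_decomp D P \<longleftrightarrow>
     \<Union>P = D \<and>
     (\<forall>A\<in>P. \<forall>B\<in>P. A \<noteq> B \<longrightarrow> A \<inter> B = {}) \<and>
     (\<forall>T\<in>P. border_strip T \<and>
        (\<forall>b\<in>T. content b = pc T \<longrightarrow> on_left_or_bottom D b) \<and>
        (\<forall>b\<in>T. content b = qc T \<longrightarrow> on_right_or_top D b))"

definition Init :: "box set set \<Rightarrow> int set" where
  "Init P = pc ` P"

definition Term :: "box set set \<Rightarrow> int set" where
  "Term P = qc ` P"

(* A cutting strip with contents
   cmin..cmax is encoded by its step directions dir :: int => bool, where dir j = True
   means the box of content j+1 lies above the box of content j ("up"), False means
   it lies to the right ("right"). *)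
definition cut_link :: "box set \<Rightarrow> (int \<Rightarrow> bool) \<Rightarrow> (box \<times> box) set" where
  "cut_link D dir =
     {(b, b'). b \<in> D \<and> b' \<in> D \<and>
        b' = (if dir (content b) then (fst b - 1, snd b) else (fst b, snd b + 1))}"

definition cut_decomp :: "box set \<Rightarrow> (int \<Rightarrow> bool) \<Rightarrow> box set set" where
  "cut_decomp D dir =
     D // {(a, b). a \<in> D \<and> b \<in> D \<and> (a, b) \<in> (cut_link D dir \<union> (cut_link D dir)\<inverse>)\<^sup>*}"

(* the twist transformation omega_i: switch the relative position of the boxes of
   contents i and i+1 of the cutting strip of P *)
definition twist :: "box set \<Rightarrow> int \<Rightarrow> box set set \<Rightarrow> box set set" where
  "twist D i P =
     (let dir = (SOME dir. P = cut_decomp D dir) in cut_decomp D (dir(i := \<not> dir i)))"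

definition exactly_one :: "bool list \<Rightarrow> bool" where
  "exactly_one xs \<longleftrightarrow> length (filter id xs) = 1"

end

(*
  Every outside decomposition is a cut decomposition: there is a direction d j (up or right)
  for each pair of consecutive contents j, j + 1 such that the strips link each box of
  content j to its neighbour in direction d j whenever that neighbour lies in the diagram.
  Along a diagonal the crossing strips cannot switch direction (a switch would put two boxes
  of the same content into one strip, or make a strip start in the interior), and where no
  strip crosses, the diagram has a bottleneck, so d j can be chosen to link nothing.

  For a cut decomposition, j is a terminal content iff some box of content j lacks its
  neighbour in direction d j, and j + 1 is an initial content iff some box of content j + 1
  lacks its neighbour against direction d j.  The twist changes d i only.  By convexity of
  skew diagrams, all boxes of content i have their neighbour in direction u iff some box of
  content i + 1 lacks its neighbour against the other direction.  Hence i is terminal after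
  the twist iff i + 1 was not initial before, and i + 1 is initial after the twist iff i was
  not terminal before; the four cases are read off from these two equivalences.
*)

theory Submission
  imports Defs
begin

lemma finite_no_increasing_self_map:
  fixes g :: "'a \<Rightarrow> 'b :: linorder"
  assumes "finite S" "x \<in> S" "\<forall>y\<in>S. f y \<in> S \<and> g y < g (f y)"
  shows False
proof -
  have "Max (g ` S) \<in> g ` S" using assms(1,2) by (intro Max_in) auto
  then obtain m where m: "m \<in> S" "Max (g ` S) = g m" by blast
  then have "g (f m) \<le> g m" using assms(1,3) by (metis Max_ge finite_imageI imageI)
  then show False using assms(3) m(1) by fastforce
qed

lemma rtrancl_Un_converse_from_source:
  assumes inj: "\<And>a a' b. (a, b) \<in> L \<Longrightarrow> (a', b) \<in> L \<Longrightarrow> a = a'"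
    and source: "\<forall>a. (a, b) \<notin> L" and "(b, y) \<in> (L \<union> L\<inverse>)\<^sup>*"
  shows "(b, y) \<in> L\<^sup>*"
  using \<open>(b, y) \<in> (L \<union> L\<inverse>)\<^sup>*\<close>
proof (induction rule: rtrancl_induct)
  case (step y z)
  show ?case
  proof (cases "(y, z) \<in> L")
    case False
    then have zy: "(z, y) \<in> L" using step by auto
    from step.IH show ?thesis
    proof (cases rule: rtranclE)
      case base
      then show ?thesis using zy source by blast
    next
      case (step y')
      then show ?thesis using zy inj by blast
    qed
  qed (use step.IH in auto)
qed simp

section \<open>Neighbouring boxes and box convexity\<close>

definition succ_box :: "bool \<Rightarrow> box \<Rightarrow> box" where
  "succ_box up b = (if up then (fst b - 1, snd b) else (fst b, snd b + 1))"

definition pred_box :: "bool \<Rightarrow> box \<Rightarrow> box" where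
  "pred_box up b = (if up then (fst b + 1, snd b) else (fst b, snd b - 1))"

lemma content_succ_box [simp]: "content (succ_box u b) = content b + 1"
  by (simp add: succ_box_def content_def)

lemma content_pred_box [simp]: "content (pred_box u b) = content b - 1"
  by (simp add: pred_box_def content_def)

lemma pred_succ_box [simp]: "pred_box u (succ_box u b) = b"
  by (simp add: pred_box_def succ_box_def)

lemma succ_pred_box [simp]: "succ_box u (pred_box u b) = b"
  by (simp add: pred_box_def succ_box_def)

lemma succ_box_eq_iff [simp]: "succ_box u b = succ_box v b \<longleftrightarrow> u = v"
  by (simp add: succ_box_def prod_eq_iff)

lemma adjacent_iff_succ_box: "adjacent a b \<longleftrightarrow> (\<exists>v. b = succ_box v a \<or> a = succ_box v b)"
  unfolding adjacent_def ex_bool_eq succ_box_def prod_eq_iff by auto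

lemma on_right_or_top_iff: "on_right_or_top D b \<longleftrightarrow> (\<exists>u. succ_box u b \<notin> D)"
  unfolding on_right_or_top_def succ_box_def by (metis (full_types))

lemma on_left_or_bottom_iff: "on_left_or_bottom D b \<longleftrightarrow> (\<exists>u. pred_box u b \<notin> D)"
  unfolding on_left_or_bottom_def pred_box_def by (metis (full_types))

definition box_convex :: "box set \<Rightarrow> bool" where
  "box_convex S \<longleftrightarrow> (\<forall>r1 c1 r2 c2 r c. (r1, c1) \<in> S \<longrightarrow> (r2, c2) \<in> S \<longrightarrow>
      r1 \<le> r \<longrightarrow> r \<le> r2 \<longrightarrow> c1 \<le> c \<longrightarrow> c \<le> c2 \<longrightarrow> (r, c) \<in> S)"

lemma box_convexD:
  "box_convex S \<Longrightarrow> (r1, c1) \<in> S \<Longrightarrow> (r2, c2) \<in> S \<Longrightarrow> r1 \<le> r \<Longrightarrow> r \<le> r2 \<Longrightarrow>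
    c1 \<le> c \<Longrightarrow> c \<le> c2 \<Longrightarrow> (r, c) \<in> S"
  unfolding box_convex_def by blast

lemma part_row_antimono:
  assumes "is_partition la" "1 \<le> r" "r \<le> r'"
  shows "part_row la r' \<le> part_row la r"
proof (cases "r' \<le> int (length la)")
  case True
  have "la ! nat (r' - 1) \<le> la ! nat (r - 1)"
  proof (cases "r = r'")
    case False
    then have "nat (r - 1) < nat (r' - 1)" "nat (r' - 1) < length la" using assms True by auto
    then show ?thesis using assms(1) unfolding is_partition_def sorted_wrt_iff_nth_less by blast
  qed simp
  then show ?thesis using True assms by (simp add: part_row_def)
qed (simp add: part_row_def)

lemma box_convex_skew:
  assumes "is_partition la" "is_partition mu"
  shows "box_convex (skew la mu)"
  unfolding box_convex_def
proof (intro allI impI)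
  fix r1 c1 r2 c2 r c
  assume b1: "(r1, c1) \<in> skew la mu" and b2: "(r2, c2) \<in> skew la mu"
    and "r1 \<le> r" "r \<le> r2" "c1 \<le> c" "c \<le> c2"
  moreover have "1 \<le> r1" using b1 by (auto simp: skew_def part_row_def split: if_splits)
  ultimately have "part_row mu r \<le> part_row mu r1" "part_row la r2 \<le> part_row la r"
    using part_row_antimono assms by fastforce+
  then show "(r, c) \<in> skew la mu" using b1 b2 \<open>c1 \<le> c\<close> \<open>c \<le> c2\<close> unfolding skew_def by auto
qed

lemma box_convex_skew_diagram: "is_skew_diagram S \<Longrightarrow> box_convex S"
  unfolding is_skew_diagram_def using box_convex_skew by blast

lemma finite_skew: "finite (skew la mu)"
proof (rule finite_subset)
  show "skew la mu \<subseteq> {1..int (length la)} \<times> {1..int (sum_list la)}"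
  proof
    fix x assume "x \<in> skew la mu"
    then obtain r c where x: "x = (r, c)" "1 \<le> c" "c \<le> part_row la r" unfolding skew_def by auto
    then have r: "1 \<le> r" "r \<le> int (length la)" by (auto simp: part_row_def split: if_splits)
    then have "la ! nat (r - 1) \<le> sum_list la" by (intro member_le_sum_list) auto
    then show "x \<in> {1..int (length la)} \<times> {1..int (sum_list la)}"
      using x r by (auto simp: part_row_def)
  qed
qed simp

lemma box_convex_no_2x2_inj_on_content:
  assumes "box_convex S" "no_2x2 S"
  shows "inj_on content S"
proof -
  have "a = b" if "a \<in> S" "b \<in> S" "content a = content b" "fst a \<le> fst b" for a b
  proof (rule ccontr)
    assume "a \<noteq> b"
    obtain r c s t where ab: "a = (r, c)" "b = (s, t)" by (cases a, cases b)
    with that \<open>a \<noteq> b\<close> have "r + 1 \<le> s" "c + 1 \<le> t" by (auto simp: content_def)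
    then have "(r + 1, c) \<in> S" "(r, c + 1) \<in> S" "(r + 1, c + 1) \<in> S"
      using box_convexD[OF assms(1), of r c s t] that ab by auto
    then show False using assms(2) that ab unfolding no_2x2_def by blast
  qed
  then show ?thesis by (metis inj_onI linorder_le_cases)
qed

lemma edge_connected_content_between:
  assumes "edge_connected S" "a \<in> S" "e \<in> S" "content a \<le> k" "k \<le> content e"
  shows "\<exists>x\<in>S. content x = k"
proof -
  have "(a, e) \<in> {(x, y). x \<in> S \<and> y \<in> S \<and> adjacent x y}\<^sup>*"
    using assms unfolding edge_connected_def by blast
  then show ?thesis using \<open>k \<le> content e\<close>
  proof (induction rule: rtrancl_induct)
    case base
    then show ?case using assms(2,4) by force
  next
    case (step y z)
    have "\<bar>content y - content z\<bar> \<le> 1"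
      using step(2) unfolding adjacent_def content_def by auto
    show ?case
    proof (cases "k \<le> content y")
      case True
      then show ?thesis using step.IH by blast
    next
      case False
      then have "content z = k" using step.prems \<open>\<bar>content y - content z\<bar> \<le> 1\<close> by linarith
      then show ?thesis using step(2) by blast
    qed
  qed
qed

lemma edge_connected_content_range:
  assumes "finite S" "S \<noteq> {}" "edge_connected S"
    and "Min (content ` S) \<le> k" "k \<le> Max (content ` S)"
  shows "\<exists>x\<in>S. content x = k"
proof -
  have "Min (content ` S) \<in> content ` S" "Max (content ` S) \<in> content ` S"
    using assms(1,2) by simp_all
  then obtain a e where "a \<in> S" "Min (content ` S) = content a" "e \<in> S" "Max (content ` S) = content e"
    by blast
  then show ?thesis using edge_connected_content_between[OF assms(3)] assms(4,5) by simp
qed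

lemma box_convex_succ_box:
  assumes "box_convex S" "b \<in> S" "x \<in> S" "content x = content b + 1"
  shows "\<exists>u. succ_box u b \<in> S"
proof -
  obtain r c s t where bx: "b = (r, c)" "x = (s, t)" by (cases b, cases x)
  then have t: "t = s + c - r + 1" using assms(4) by (simp add: content_def)
  show ?thesis
  proof (cases "s < r")
    case True
    then have "(r - 1, c) \<in> S" using box_convexD[OF assms(1), of s t r c] assms bx t by simp
    then show ?thesis using bx by (intro exI[of _ True]) (simp add: succ_box_def)
  next
    case False
    then have "(r, c + 1) \<in> S" using box_convexD[OF assms(1), of r c s t] assms bx t by simp
    then show ?thesis using bx by (intro exI[of _ False]) (simp add: succ_box_def)
  qed
qed

lemma box_convex_pred_box:
  assumes "box_convex S" "b \<in> S" "x \<in> S" "content x = content b - 1"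
  shows "\<exists>u. pred_box u b \<in> S"
proof -
  obtain r c s t where bx: "b = (r, c)" "x = (s, t)" by (cases b, cases x)
  then have t: "t = s + c - r - 1" using assms(4) by (simp add: content_def)
  show ?thesis
  proof (cases "r < s")
    case True
    then have "(r + 1, c) \<in> S" using box_convexD[OF assms(1), of r c s t] assms bx t by simp
    then show ?thesis using bx by (intro exI[of _ True]) (simp add: pred_box_def)
  next
    case False
    then have "(r, c - 1) \<in> S" using box_convexD[OF assms(1), of s t r c] assms bx t by simp
    then show ?thesis using bx by (intro exI[of _ False]) (simp add: pred_box_def)
  qed
qed

lemma box_convex_bottleneck_level:
  assumes cv: "box_convex D" and a: "a \<in> D" and step: "succ_box u a \<in> D"
    and no_side: "succ_box (\<not> u) a \<notin> D" and no_entry: "pred_box (\<not> u) (succ_box u a) \<notin> D"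
  shows "{x\<in>D. content x = content a} = {a}"
proof -
  obtain r c where ra: "a = (r, c)" by (cases a)
  have "x = a" if x: "x \<in> D" "content x = content a" for x
  proof (rule ccontr)
    assume "x \<noteq> a"
    obtain s t where sx: "x = (s, t)" by (cases x)
    with x ra \<open>x \<noteq> a\<close> have t: "t = s + c - r" and "s \<noteq> r" by (auto simp: content_def)
    then consider "s < r" | "r < s" by linarith
    then show False
    proof cases
      case 1
      note between = box_convexD[OF cv x(1)[unfolded sx] a[unfolded ra]]
      show False
      proof (cases u)
        case True
        then show False using between[of "r - 1" "c - 1"] no_entry ra t 1
          by (simp add: succ_box_def pred_box_def)
      next
        case False
        then show False using between[of "r - 1" c] no_side ra t 1 by (simp add: succ_box_def)
      qed
    next
      case 2
      show False
      proof (cases u)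
        case True
        then have up: "(r - 1, c) \<in> D" using step ra by (simp add: succ_box_def)
        show False using box_convexD[OF cv up x(1)[unfolded sx], of r "c + 1"] no_side True ra t 2
          by (simp add: succ_box_def)
      next
        case False
        then show False using box_convexD[OF cv a[unfolded ra] x(1)[unfolded sx], of "r + 1" "c + 1"]
            no_entry ra t 2 by (simp add: succ_box_def pred_box_def)
      qed
    qed
  qed
  then show ?thesis using a by blast
qed

lemma box_convex_level_succ_iff:
  assumes cv: "box_convex D" and fin: "finite D" and ne: "\<exists>b\<in>D. content b = i + 1"
  shows "(\<forall>b\<in>D. content b = i \<longrightarrow> succ_box u b \<in> D) \<longleftrightarrow>
    (\<exists>b'\<in>D. content b' = i + 1 \<and> pred_box (\<not> u) b' \<notin> D)"
proof
  assume succ: "\<forall>b\<in>D. content b = i \<longrightarrow> succ_box u b \<in> D"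
  show "\<exists>b'\<in>D. content b' = i + 1 \<and> pred_box (\<not> u) b' \<notin> D"
  proof (rule ccontr)
    assume no_gap: "\<not> ?thesis"
    \<comment> \<open>Then each box of content i + 1 moves one diagonal step (up-left if u, down-right
      otherwise) to another box of content i + 1, which is impossible in a finite set.\<close>
    define f where "f b = succ_box u (pred_box (\<not> u) b)" for b
    define g :: "box \<Rightarrow> int" where "g b = (if u then - fst b else fst b)" for b
    have "f b \<in> {b\<in>D. content b = i + 1}" if "b \<in> {b\<in>D. content b = i + 1}" for b
      using succ no_gap that by (auto simp: f_def)
    moreover have "g b < g (f b)" for b by (simp add: f_def g_def succ_box_def pred_box_def)
    moreover obtain x where "x \<in> {b\<in>D. content b = i + 1}" using ne by blast
    ultimately show False
      using fin by (intro finite_no_increasing_self_map[of "{b\<in>D. content b = i + 1}" x f g]) auto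
  qed
next
  assume "\<exists>b'\<in>D. content b' = i + 1 \<and> pred_box (\<not> u) b' \<notin> D"
  then obtain s t where b': "(s, t) \<in> D" "t - s = i + 1" "pred_box (\<not> u) (s, t) \<notin> D"
    by (auto simp: content_def)
  show "\<forall>b\<in>D. content b = i \<longrightarrow> succ_box u b \<in> D"
  proof (intro ballI impI)
    fix b assume "b \<in> D" "content b = i"
    then obtain r c where b: "(r, c) \<in> D" "c - r = i" "b = (r, c)" by (cases b) (auto simp: content_def)
    show "succ_box u b \<in> D"
    proof (cases u)
      case True
      have "(s, t - 1) \<notin> D" using b' True by (simp add: pred_box_def)
      then have "s < r" using box_convexD[OF cv b(1) b'(1), of s "t - 1"] b b' by fastforce
      then have "(r - 1, c) \<in> D" using box_convexD[OF cv b'(1) b(1), of "r - 1" c] b b' by simp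
      then show ?thesis using True b by (simp add: succ_box_def)
    next
      case False
      have "(s + 1, t) \<notin> D" using b' False by (simp add: pred_box_def)
      then have "r \<le> s" using box_convexD[OF cv b'(1) b(1), of "s + 1" t] b b' by fastforce
      then have "(r, c + 1) \<in> D" using box_convexD[OF cv b(1) b'(1), of r "c + 1"] b b' by simp
      then show ?thesis using False b by (simp add: succ_box_def)
    qed
  qed
qed

section \<open>Initial and terminal contents of cut decompositions\<close>

lemma cut_link_iff: "(a, b) \<in> cut_link D d \<longleftrightarrow> a \<in> D \<and> b \<in> D \<and> b = succ_box (d (content a)) a"
  unfolding cut_link_def succ_box_def by auto

lemma cut_link_rtrancl_content: "(a, b) \<in> (cut_link D d)\<^sup>* \<Longrightarrow> content a \<le> content b"
  by (induction rule: rtrancl_induct) (auto simp: cut_link_iff)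

lemma cut_link_pred_unique: "(a, b) \<in> cut_link D d \<Longrightarrow> (a', b) \<in> cut_link D d \<Longrightarrow> a = a'"
  by (metis cut_link_iff content_succ_box pred_succ_box add_right_cancel)

lemma cut_link_succ_unique: "(a, b) \<in> cut_link D d \<Longrightarrow> (a, b') \<in> cut_link D d \<Longrightarrow> b = b'"
  by (simp add: cut_link_iff)

definition cut_class :: "box set \<Rightarrow> (int \<Rightarrow> bool) \<Rightarrow> box \<Rightarrow> box set" where
  "cut_class D d x = {y. (x, y) \<in> (cut_link D d \<union> (cut_link D d)\<inverse>)\<^sup>*}"

lemma cut_class_subset:
  assumes "x \<in> D"
  shows "cut_class D d x \<subseteq> D"
proof
  fix y assume "y \<in> cut_class D d x"
  then have "(x, y) \<in> (cut_link D d \<union> (cut_link D d)\<inverse>)\<^sup>*" by (simp add: cut_class_def)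
  then show "y \<in> D" by (induction rule: rtrancl_induct) (use assms in \<open>auto simp: cut_link_iff\<close>)
qed

lemma cut_decomp_eq: "cut_decomp D d = cut_class D d ` D"
proof -
  have "{(a, b). a \<in> D \<and> b \<in> D \<and> (a, b) \<in> (cut_link D d \<union> (cut_link D d)\<inverse>)\<^sup>*} `` {x}
      = cut_class D d x" if "x \<in> D" for x
    using cut_class_subset[OF that] that unfolding cut_class_def by auto
  then show ?thesis unfolding cut_decomp_def quotient_def by auto
qed

lemma Init_cut_decomp_sources:
  assumes "finite D"
  shows "k \<in> Init (cut_decomp D d) \<longleftrightarrow> (\<exists>b\<in>D. content b = k \<and> (\<forall>a. (a, b) \<notin> cut_link D d))"
proof
  assume "k \<in> Init (cut_decomp D d)"
  then obtain x where x: "x \<in> D" and k: "k = pc (cut_class D d x)"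
    by (auto simp: Init_def cut_decomp_eq)
  let ?C = "cut_class D d x"
  have fin: "finite ?C" using cut_class_subset[OF x] assms by (rule finite_subset)
  have "x \<in> ?C" by (simp add: cut_class_def)
  then have "Min (content ` ?C) \<in> content ` ?C" using fin by (intro Min_in) auto
  then obtain m where m: "m \<in> ?C" "content m = Min (content ` ?C)" by auto
  have "(a, m) \<notin> cut_link D d" for a
  proof
    assume am: "(a, m) \<in> cut_link D d"
    then have "a \<in> ?C" using m(1) unfolding cut_class_def by (auto intro: rtrancl_into_rtrancl)
    then have "content m \<le> content a" using m fin by simp
    then show False using am by (simp add: cut_link_iff)
  qed
  then show "\<exists>b\<in>D. content b = k \<and> (\<forall>a. (a, b) \<notin> cut_link D d)"
    using m cut_class_subset[OF x] k unfolding pc_def by blast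
next
  assume "\<exists>b\<in>D. content b = k \<and> (\<forall>a. (a, b) \<notin> cut_link D d)"
  then obtain b where b: "b \<in> D" "content b = k" and source: "\<forall>a. (a, b) \<notin> cut_link D d"
    by blast
  let ?C = "cut_class D d b"
  have "(b, y) \<in> (cut_link D d)\<^sup>*" if "y \<in> ?C" for y
  proof (rule rtrancl_Un_converse_from_source[OF _ source])
    show "(b, y) \<in> (cut_link D d \<union> (cut_link D d)\<inverse>)\<^sup>*" using that by (simp add: cut_class_def)
  qed (rule cut_link_pred_unique)
  then have "content b \<le> content y" if "y \<in> ?C" for y
    using that by (blast intro: cut_link_rtrancl_content)
  moreover have "b \<in> ?C" by (simp add: cut_class_def)
  moreover have "finite ?C" using cut_class_subset[OF b(1)] assms by (rule finite_subset)
  ultimately have "pc ?C = k" unfolding pc_def using b(2) by (intro Min_eqI) auto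
  then show "k \<in> Init (cut_decomp D d)" using b(1) by (auto simp: Init_def cut_decomp_eq)
qed

lemma Term_cut_decomp_sinks:
  assumes "finite D"
  shows "k \<in> Term (cut_decomp D d) \<longleftrightarrow> (\<exists>b\<in>D. content b = k \<and> (\<forall>a. (b, a) \<notin> cut_link D d))"
proof
  assume "k \<in> Term (cut_decomp D d)"
  then obtain x where x: "x \<in> D" and k: "k = qc (cut_class D d x)"
    by (auto simp: Term_def cut_decomp_eq)
  let ?C = "cut_class D d x"
  have fin: "finite ?C" using cut_class_subset[OF x] assms by (rule finite_subset)
  have "x \<in> ?C" by (simp add: cut_class_def)
  then have "Max (content ` ?C) \<in> content ` ?C" using fin by (intro Max_in) auto
  then obtain m where m: "m \<in> ?C" "content m = Max (content ` ?C)" by auto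
  have "(m, a) \<notin> cut_link D d" for a
  proof
    assume ma: "(m, a) \<in> cut_link D d"
    then have "a \<in> ?C" using m(1) unfolding cut_class_def by (auto intro: rtrancl_into_rtrancl)
    then have "content a \<le> content m" using m fin by simp
    then show False using ma by (simp add: cut_link_iff)
  qed
  then show "\<exists>b\<in>D. content b = k \<and> (\<forall>a. (b, a) \<notin> cut_link D d)"
    using m cut_class_subset[OF x] k unfolding qc_def by blast
next
  assume "\<exists>b\<in>D. content b = k \<and> (\<forall>a. (b, a) \<notin> cut_link D d)"
  then obtain b where b: "b \<in> D" "content b = k" and sink: "\<forall>a. (a, b) \<notin> (cut_link D d)\<inverse>"
    by blast
  let ?C = "cut_class D d b"
  have "(b, y) \<in> ((cut_link D d)\<inverse>)\<^sup>*" if "y \<in> ?C" for y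
  proof (rule rtrancl_Un_converse_from_source[OF _ sink])
    show "(b, y) \<in> ((cut_link D d)\<inverse> \<union> ((cut_link D d)\<inverse>)\<inverse>)\<^sup>*"
      using that by (simp add: cut_class_def Un_commute)
  qed (use cut_link_succ_unique in blast)
  then have "content y \<le> content b" if "y \<in> ?C" for y
    using that by (blast intro: cut_link_rtrancl_content rtrancl_converseD)
  moreover have "b \<in> ?C" by (simp add: cut_class_def)
  moreover have "finite ?C" using cut_class_subset[OF b(1)] assms by (rule finite_subset)
  ultimately have "qc ?C = k" unfolding qc_def using b(2) by (intro Max_eqI) auto
  then show "k \<in> Term (cut_decomp D d)" using b(1) by (auto simp: Term_def cut_decomp_eq)
qed

lemma cut_link_source_iff:
  assumes "b \<in> D"
  shows "(\<forall>a. (a, b) \<notin> cut_link D d) \<longleftrightarrow> pred_box (d (content b - 1)) b \<notin> D"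
proof
  assume source: "\<forall>a. (a, b) \<notin> cut_link D d"
  show "pred_box (d (content b - 1)) b \<notin> D"
  proof
    assume "pred_box (d (content b - 1)) b \<in> D"
    then have "(pred_box (d (content b - 1)) b, b) \<in> cut_link D d"
      using assms by (simp add: cut_link_iff)
    then show False using source by blast
  qed
next
  assume pred_out: "pred_box (d (content b - 1)) b \<notin> D"
  show "\<forall>a. (a, b) \<notin> cut_link D d"
  proof (intro allI notI)
    fix a assume "(a, b) \<in> cut_link D d"
    then have "a \<in> D" "b = succ_box (d (content a)) a" by (auto simp: cut_link_iff)
    then show False using pred_out by simp
  qed
qed

lemma cut_link_sink_iff:
  "b \<in> D \<Longrightarrow> (\<forall>a. (b, a) \<notin> cut_link D d) \<longleftrightarrow> succ_box (d (content b)) b \<notin> D"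
  unfolding cut_link_iff by blast

lemma Init_cut_decomp:
  assumes "finite D"
  shows "k \<in> Init (cut_decomp D d) \<longleftrightarrow> (\<exists>b\<in>D. content b = k \<and> pred_box (d (k - 1)) b \<notin> D)"
  unfolding Init_cut_decomp_sources[OF assms] using cut_link_source_iff by blast

lemma Term_cut_decomp:
  assumes "finite D"
  shows "k \<in> Term (cut_decomp D d) \<longleftrightarrow> (\<exists>b\<in>D. content b = k \<and> succ_box (d k) b \<notin> D)"
  unfolding Term_cut_decomp_sinks[OF assms] using cut_link_sink_iff by blast

lemma Term_cut_decomp_update:
  "finite D \<Longrightarrow> Term (cut_decomp D (d(i := v))) - {i} = Term (cut_decomp D d) - {i}"
  by (auto simp: Term_cut_decomp)

lemma Init_cut_decomp_update:
  "finite D \<Longrightarrow> Init (cut_decomp D (d(i := v))) - {i + 1} = Init (cut_decomp D d) - {i + 1}"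
  by (auto simp: Init_cut_decomp)

lemma Term_cut_decomp_twist:
  assumes "box_convex D" "finite D" "\<exists>b\<in>D. content b = i + 1"
  shows "i \<in> Term (cut_decomp D (d(i := \<not> d i))) \<longleftrightarrow> i + 1 \<notin> Init (cut_decomp D d)"
  using box_convex_level_succ_iff[OF assms, of "\<not> d i"]
  unfolding Term_cut_decomp[OF assms(2)] Init_cut_decomp[OF assms(2)] by auto

lemma Init_cut_decomp_twist:
  assumes "box_convex D" "finite D" "\<exists>b\<in>D. content b = i + 1"
  shows "i + 1 \<in> Init (cut_decomp D (d(i := \<not> d i))) \<longleftrightarrow> i \<notin> Term (cut_decomp D d)"
  using box_convex_level_succ_iff[OF assms, of "d i"]
  unfolding Term_cut_decomp[OF assms(2)] Init_cut_decomp[OF assms(2)] by auto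

lemma exactly_one_twist_cases:
  fixes I T I' T' :: "int set"
  assumes "I' - {i + 1} = I - {i + 1}" "T' - {i} = T - {i}"
    and "i \<in> T' \<longleftrightarrow> i + 1 \<notin> I" "i + 1 \<in> I' \<longleftrightarrow> i \<notin> T"
  shows "exactly_one
     [ i \<notin> T \<and> i + 1 \<notin> I \<and> I' = I \<union> {i + 1} \<and> T' = T \<union> {i},
       i \<in> T \<and> i + 1 \<in> I \<and> I' = I - {i + 1} \<and> T' = T - {i},
       i \<in> T \<and> i + 1 \<notin> I \<and> I' = I \<and> T' = T,
       i \<notin> T \<and> i + 1 \<in> I \<and> I' = I \<and> T' = T ]"
proof -
  have I': "I' = (I - {i + 1}) \<union> (if i \<in> T then {} else {i + 1})"
    using assms(1,4) by auto
  have T': "T' = (T - {i}) \<union> (if i + 1 \<in> I then {} else {i})"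
    using assms(2,3) by auto
  show ?thesis unfolding I' T' exactly_one_def
    by (cases "i \<in> T"; cases "i + 1 \<in> I") auto
qed

section \<open>Outside decompositions are cut decompositions\<close>

locale outside_decomposition =
  fixes D :: "box set" and P :: "box set set"
  assumes D_convex: "box_convex D" and D_finite: "finite D" and P_decomp: "outside_decomp D P"
begin

lemma Union_strips: "\<Union>P = D"
  using P_decomp by (simp add: outside_decomp_def)

lemma strip_subset: "T \<in> P \<Longrightarrow> T \<subseteq> D"
  using Union_strips by blast

lemma strip_cover: "b \<in> D \<Longrightarrow> \<exists>T\<in>P. b \<in> T"
  using Union_strips by blast

lemma strip_unique: "T \<in> P \<Longrightarrow> T' \<in> P \<Longrightarrow> b \<in> T \<Longrightarrow> b \<in> T' \<Longrightarrow> T = T'"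
  using P_decomp unfolding outside_decomp_def by blast

lemma strip_border_strip: "T \<in> P \<Longrightarrow> border_strip T"
  using P_decomp unfolding outside_decomp_def by simp

lemma strip_start_left_or_bottom:
  "T \<in> P \<Longrightarrow> b \<in> T \<Longrightarrow> content b = pc T \<Longrightarrow> on_left_or_bottom D b"
  using P_decomp unfolding outside_decomp_def by simp

lemma strip_end_right_or_top:
  "T \<in> P \<Longrightarrow> b \<in> T \<Longrightarrow> content b = qc T \<Longrightarrow> on_right_or_top D b"
  using P_decomp unfolding outside_decomp_def by simp

lemma strip_box_convex: "T \<in> P \<Longrightarrow> box_convex T"
  using strip_border_strip box_convex_skew_diagram by (simp add: border_strip_def)

lemma strip_edge_connected: "T \<in> P \<Longrightarrow> edge_connected T"
  using strip_border_strip by (simp add: border_strip_def)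

lemma strip_finite: "T \<in> P \<Longrightarrow> finite T"
  using strip_subset D_finite finite_subset by blast

lemma strip_content_inj: "T \<in> P \<Longrightarrow> inj_on content T"
  using strip_border_strip strip_box_convex box_convex_no_2x2_inj_on_content
  by (simp add: border_strip_def)

lemma strip_succ_or_exit:
  assumes T: "T \<in> P" and b: "b \<in> T"
  shows "(\<exists>u. succ_box u b \<in> T) \<or> (\<exists>u. succ_box u b \<notin> D)"
proof (cases "content b = qc T")
  case True
  then show ?thesis
    using strip_end_right_or_top[OF T b] by (simp add: on_right_or_top_iff)
next
  case False
  have "qc T \<in> content ` T" unfolding qc_def using strip_finite[OF T] b by (intro Max_in) auto
  then obtain e where e: "e \<in> T" "content e = qc T" by auto
  have "content b \<le> qc T" using strip_finite[OF T] b unfolding qc_def by simp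
  then have "content b < qc T" using False by simp
  then obtain x where "x \<in> T" "content x = content b + 1"
    using edge_connected_content_between[OF strip_edge_connected[OF T] b e(1), of "content b + 1"] e
    by auto
  then show ?thesis using box_convex_succ_box[OF strip_box_convex[OF T] b] by blast
qed

lemma strip_pred_or_entry:
  assumes T: "T \<in> P" and b: "b \<in> T"
  shows "(\<exists>u. pred_box u b \<in> T) \<or> (\<exists>u. pred_box u b \<notin> D)"
proof (cases "content b = pc T")
  case True
  then show ?thesis
    using strip_start_left_or_bottom[OF T b] by (simp add: on_left_or_bottom_iff)
next
  case False
  have "pc T \<in> content ` T" unfolding pc_def using strip_finite[OF T] b by (intro Min_in) auto
  then obtain e where e: "e \<in> T" "content e = pc T" by auto
  have "pc T \<le> content b" using strip_finite[OF T] b unfolding pc_def by simp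
  then have "pc T < content b" using False by simp
  then obtain x where "x \<in> T" "content x = content b - 1"
    using edge_connected_content_between[OF strip_edge_connected[OF T] e(1) b, of "content b - 1"] e
    by auto
  then show ?thesis using box_convex_pred_box[OF strip_box_convex[OF T] b] by blast
qed

definition same_strip :: "box \<Rightarrow> box \<Rightarrow> bool" where
  "same_strip a b \<longleftrightarrow> (\<exists>T\<in>P. a \<in> T \<and> b \<in> T)"

definition linked :: "box \<Rightarrow> bool \<Rightarrow> bool" where
  "linked b u \<longleftrightarrow> same_strip b (succ_box u b)"

lemma same_strip_sym: "same_strip a b \<Longrightarrow> same_strip b a"
  unfolding same_strip_def by blast

lemma same_strip_trans:
  assumes "same_strip a b" "same_strip b c"
  shows "same_strip a c"
proof -
  obtain T T' where "T \<in> P" "T' \<in> P" "a \<in> T" "b \<in> T" "b \<in> T'" "c \<in> T'"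
    using assms unfolding same_strip_def by blast
  then show ?thesis using strip_unique unfolding same_strip_def by metis
qed

lemma same_strip_content_eq:
  assumes "same_strip a b" "content a = content b"
  shows "a = b"
proof -
  obtain T where "T \<in> P" "a \<in> T" "b \<in> T" using assms(1) unfolding same_strip_def by blast
  then show ?thesis using inj_onD[OF strip_content_inj] assms(2) by blast
qed

lemma linked_in_D: "linked b u \<Longrightarrow> b \<in> D \<and> succ_box u b \<in> D"
  unfolding linked_def same_strip_def using strip_subset by blast

lemma linked_unique:
  assumes "linked b u" "linked b v"
  shows "u = v"
proof -
  have "same_strip (succ_box u b) (succ_box v b)"
    using same_strip_trans[OF same_strip_sym] assms unfolding linked_def by blast
  then have "succ_box u b = succ_box v b" by (rule same_strip_content_eq) simp
  then show ?thesis by simp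
qed

lemma linked_or_exit:
  assumes "b \<in> D"
  shows "(\<exists>u. linked b u) \<or> (\<exists>u. succ_box u b \<notin> D)"
proof -
  obtain T where T: "T \<in> P" "b \<in> T" using strip_cover assms by blast
  have "linked b u" if "succ_box u b \<in> T" for u
    using that T unfolding linked_def same_strip_def by auto
  then show ?thesis using strip_succ_or_exit[OF T] by blast
qed

lemma linked_or_entry:
  assumes "b \<in> D"
  shows "(\<exists>u. linked (pred_box u b) u) \<or> (\<exists>u. pred_box u b \<notin> D)"
proof -
  obtain T where T: "T \<in> P" "b \<in> T" using strip_cover assms by blast
  have "linked (pred_box u b) u" if "pred_box u b \<in> T" for u
    using that T unfolding linked_def same_strip_def by auto
  then show ?thesis using strip_pred_or_entry[OF T] by blast
qed

text \<open>Up at z and right at the next box of the diagonal is impossible: the box between them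
  is not on the left or bottom perimeter, yet both boxes that could precede it in its strip
  continue elsewhere.  Right then up would put both boxes of the diagonal into the strip of
  the box between them.\<close>

lemma linked_diagonal_step:
  assumes zu: "linked z u" and zv: "linked (fst z + 1, snd z + 1) v"
  shows "u = v"
proof (rule ccontr)
  assume "u \<noteq> v"
  obtain r c where z: "z = (r, c)" by (cases z)
  show False
  proof (cases u)
    case True
    then have up: "linked (r, c) True" and right: "linked (r + 1, c + 1) False"
      using zu zv \<open>u \<noteq> v\<close> z by auto
    have "(r - 1, c) \<in> D" "(r + 1, c + 1 + 1) \<in> D"
      using linked_in_D[OF up] linked_in_D[OF right] by (simp_all add: succ_box_def)
    then have w: "(r, c + 1) \<in> D"
      using box_convexD[OF D_convex, of "r - 1" c "r + 1" "c + 1 + 1"] by simp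
    have "pred_box True (r, c + 1) = (r + 1, c + 1)" "pred_box False (r, c + 1) = (r, c)"
      by (simp_all add: pred_box_def)
    moreover have "(r, c) \<in> D" "(r + 1, c + 1) \<in> D"
      using linked_in_D[OF up] linked_in_D[OF right] by simp_all
    ultimately obtain v' where "linked (pred_box v' (r, c + 1)) v'"
      using linked_or_entry[OF w] by (metis (full_types))
    then show False using linked_unique up right \<open>pred_box True (r, c + 1) = (r + 1, c + 1)\<close>
        \<open>pred_box False (r, c + 1) = (r, c)\<close> by (cases v') auto
  next
    case False
    then have "same_strip (r, c) (r, c + 1)" "same_strip (r + 1, c + 1) (r, c + 1)"
      using zu zv \<open>u \<noteq> v\<close> z unfolding linked_def by (auto simp: succ_box_def)
    then have "same_strip (r, c) (r + 1, c + 1)" using same_strip_trans same_strip_sym by blast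
    then have "(r, c) = (r + 1, c + 1)" by (rule same_strip_content_eq) (simp add: content_def)
    then show False by simp
  qed
qed

lemma linked_diagonal:
  assumes zu: "linked z u" and "linked (fst z + int n, snd z + int n) v"
  shows "u = v"
  using assms(2)
proof (induction n arbitrary: v)
  case 0
  then show ?case using zu linked_unique by simp
next
  case (Suc n)
  obtain r c where z: "z = (r, c)" by (cases z)
  let ?y = "(r + int n, c + int n)"
  obtain w where w: "linked ?y w"
  proof (cases "n = 0")
    case True
    then show ?thesis using that zu z by simp
  next
    case False
    have zD: "(r, c) \<in> D" and farD: "(r + int n + 1, c + int n + 1) \<in> D"
      using linked_in_D[OF zu] linked_in_D[OF Suc.prems] z by (auto simp: algebra_simps)
    have "1 \<le> int n" using False by simp
    then have "?y \<in> D" "(r + int n - 1, c + int n) \<in> D" "(r + int n, c + int n + 1) \<in> D"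
      using box_convexD[OF D_convex zD farD, of "r + int n" "c + int n"]
        box_convexD[OF D_convex zD farD, of "r + int n - 1" "c + int n"]
        box_convexD[OF D_convex zD farD, of "r + int n" "c + int n + 1"] by simp_all
    then have "?y \<in> D" "succ_box True ?y \<in> D" "succ_box False ?y \<in> D"
      by (simp_all add: succ_box_def)
    then show ?thesis using that linked_or_exit by (metis (full_types))
  qed
  then have "u = w" using Suc.IH z by simp
  moreover have "w = v" using linked_diagonal_step[OF w] Suc.prems z by (simp add: algebra_simps)
  ultimately show ?case by simp
qed

lemma linked_same_content:
  assumes "linked x u" "linked y v" "content x = content y"
  shows "u = v"
proof -
  have "u = v" if "linked x u" "linked y v" "content x = content y" "fst x \<le> fst y" for x y u v
  proof -
    define n where "n = nat (fst y - fst x)"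
    then have "y = (fst x + int n, snd x + int n)"
      using that(3,4) by (simp add: content_def prod_eq_iff)
    then show ?thesis using linked_diagonal[OF that(1), of n v] that(2) by simp
  qed
  from this[of x u y v] this[of y v x u] show ?thesis
    using assms by (cases "fst x \<le> fst y") auto
qed

lemma unlinked_step_bottleneck:
  assumes a: "a \<in> D" and step: "succ_box u a \<in> D" and unlinked: "\<not> linked a u"
    and no_cross: "\<And>x. content x = content a \<Longrightarrow> \<not> linked x (\<not> u)"
  shows "succ_box (\<not> u) a \<notin> D" and "pred_box (\<not> u) (succ_box u a) \<notin> D"
proof -
  have "\<not> linked a v" for v
  proof (cases "v = u")
    case False
    then have "v = (\<not> u)" by (cases v; cases u) simp_all
    then show ?thesis using no_cross[of a] by simp
  qed (use unlinked in simp)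
  then obtain v where v: "succ_box v a \<notin> D" using linked_or_exit[OF a] by blast
  moreover have "v \<noteq> u"
  proof
    assume "v = u"
    then show False using v step by simp
  qed
  ultimately show "succ_box (\<not> u) a \<notin> D" by (cases v; cases u) simp_all
next
  let ?b = "succ_box u a"
  have "\<not> linked (pred_box v ?b) v" for v
  proof (cases "v = u")
    case False
    then have "v = (\<not> u)" by (cases v; cases u) simp_all
    then show ?thesis using no_cross[of "pred_box (\<not> u) ?b"] by simp
  qed (use unlinked in simp)
  then obtain v where v: "pred_box v ?b \<notin> D" using linked_or_entry[OF step] by blast
  moreover have "v \<noteq> u"
  proof
    assume "v = u"
    then show False using v a by simp
  qed
  ultimately show "pred_box (\<not> u) ?b \<notin> D" by (cases v; cases u) simp_all
qed

text \<open>Where no strip crosses from content j to content j + 1, this picks a direction in which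
  D has no pair of boxes with these contents (there is one, by the bottleneck lemma), so that the
  cut decomposition links nothing there either.\<close>

definition strip_dir :: "int \<Rightarrow> bool" where
  "strip_dir j \<longleftrightarrow> (\<exists>x. content x = j \<and> linked x True) \<or>
     (\<not> (\<exists>x. content x = j \<and> linked x False) \<and> \<not> (\<exists>x\<in>D. content x = j \<and> succ_box True x \<in> D))"

lemma strip_dir_linked:
  assumes "linked x u"
  shows "strip_dir (content x) = u"
proof (cases u)
  case False
  then have "\<not> (\<exists>y. content y = content x \<and> linked y True)"
    using linked_same_content assms by blast
  moreover have "\<exists>y. content y = content x \<and> linked y False"
    using assms False by (intro exI[of _ x]) simp
  ultimately show ?thesis using False unfolding strip_dir_def by blast
next
  case True
  then have "linked x True" using assms by simp
  then show ?thesis using True unfolding strip_dir_def by blast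
qed

lemma cut_link_strip_dir_linked:
  assumes ab: "(a, b) \<in> cut_link D strip_dir"
  shows "linked a (strip_dir (content a))"
proof (rule ccontr)
  let ?u = "strip_dir (content a)"
  have a: "a \<in> D" and step: "succ_box ?u a \<in> D" using ab by (auto simp: cut_link_iff)
  assume unlinked: "\<not> linked a ?u"
  have "\<not> linked x (\<not> ?u)" if "content x = content a" for x
    using strip_dir_linked that by fastforce
  note bottleneck = unlinked_step_bottleneck[OF a step unlinked this]
  have level: "{x\<in>D. content x = content a} = {a}"
    by (rule box_convex_bottleneck_level[OF D_convex a step bottleneck])
  show False
  proof (cases "\<exists>x. content x = content a \<and> linked x ?u")
    case True
    then obtain x where "content x = content a" "linked x ?u" by blast
    moreover have "x \<in> D" using linked_in_D calculation(2) by blast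
    ultimately have "x = a" using level by blast
    then show False using \<open>linked x ?u\<close> unlinked by simp
  next
    case False
    have no_links: "\<not> linked x v" if "content x = content a" for x v
    proof
      assume "linked x v"
      then have "v = ?u" using strip_dir_linked[OF \<open>linked x v\<close>] that by simp
      then show False using False \<open>linked x v\<close> that by blast
    qed
    have level_singleton: "x \<in> D \<and> content x = content a \<longleftrightarrow> x = a" for x using level a by blast
    have "(\<exists>x\<in>D. content x = content a \<and> succ_box True x \<in> D) \<longleftrightarrow> succ_box True a \<in> D"
    proof
      assume "\<exists>x\<in>D. content x = content a \<and> succ_box True x \<in> D"
      then obtain x where "x \<in> D" "content x = content a" "succ_box True x \<in> D" by blast
      then show "succ_box True a \<in> D" using level_singleton[of x] by simp
    qed (use a in blast)
    moreover have "\<not> (\<exists>x. content x = content a \<and> linked x v)" for v using no_links by blast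
    ultimately have "?u \<longleftrightarrow> succ_box True a \<notin> D" unfolding strip_dir_def by blast
    then show False using step bottleneck(1) by (cases ?u) auto
  qed
qed

lemma cut_link_same_strip:
  assumes "(a, b) \<in> cut_link D strip_dir"
  shows "same_strip a b"
proof -
  have "b = succ_box (strip_dir (content a)) a" using assms by (simp add: cut_link_iff)
  then show ?thesis using cut_link_strip_dir_linked[OF assms] unfolding linked_def by simp
qed

lemma linked_cut_link: "linked a u \<Longrightarrow> (a, succ_box u a) \<in> cut_link D strip_dir"
  using linked_in_D strip_dir_linked by (simp add: cut_link_iff)

lemma cut_class_strip_dir:
  assumes T: "T \<in> P" and x: "x \<in> T"
  shows "cut_class D strip_dir x = T"
proof
  show "cut_class D strip_dir x \<subseteq> T"
  proof
    fix y assume "y \<in> cut_class D strip_dir x"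
    then have "(x, y) \<in> (cut_link D strip_dir \<union> (cut_link D strip_dir)\<inverse>)\<^sup>*"
      by (simp add: cut_class_def)
    then show "y \<in> T"
    proof (induction rule: rtrancl_induct)
      case (step y z)
      have "same_strip y z \<or> same_strip z y"
        using step(2) cut_link_same_strip by blast
      then obtain T' where "T' \<in> P" "y \<in> T'" "z \<in> T'" unfolding same_strip_def by blast
      then show ?case using strip_unique[OF T] step.IH by blast
    qed (rule x)
  qed
next
  show "T \<subseteq> cut_class D strip_dir x"
  proof
    fix y assume "y \<in> T"
    then have "(x, y) \<in> {(a, b). a \<in> T \<and> b \<in> T \<and> adjacent a b}\<^sup>*"
      using strip_edge_connected[OF T] x unfolding edge_connected_def by blast
    moreover have "(a, b) \<in> cut_link D strip_dir \<union> (cut_link D strip_dir)\<inverse>"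
      if ab: "a \<in> T" "b \<in> T" "adjacent a b" for a b
    proof -
      have "same_strip a b" using ab(1,2) T unfolding same_strip_def by blast
      moreover obtain v where "b = succ_box v a \<or> a = succ_box v b"
        using ab(3) by (auto simp: adjacent_iff_succ_box)
      ultimately have "linked a v \<and> b = succ_box v a \<or> linked b v \<and> a = succ_box v b"
        unfolding linked_def using same_strip_sym by blast
      then show ?thesis using linked_cut_link by blast
    qed
    then have "{(a, b). a \<in> T \<and> b \<in> T \<and> adjacent a b}
        \<subseteq> cut_link D strip_dir \<union> (cut_link D strip_dir)\<inverse>" by blast
    ultimately show "y \<in> cut_class D strip_dir x"
      unfolding cut_class_def using rtrancl_mono by blast
  qed
qed

lemma strips_eq_cut_decomp: "P = cut_decomp D strip_dir"
proof -
  have "T \<in> cut_class D strip_dir ` D" if T: "T \<in> P" for T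
  proof -
    have "T \<noteq> {}" using strip_border_strip[OF T] by (simp add: border_strip_def)
    then obtain x where "x \<in> T" by blast
    then show ?thesis using cut_class_strip_dir[OF T] strip_subset[OF T] by (metis rev_image_eqI subsetD)
  qed
  moreover have "cut_class D strip_dir x \<in> P" if "x \<in> D" for x
    using strip_cover[OF that] cut_class_strip_dir by metis
  ultimately show ?thesis unfolding cut_decomp_eq by blast
qed

end

lemma outside_decomp_is_cut_decomp:
  "box_convex D \<Longrightarrow> finite D \<Longrightarrow> outside_decomp D P \<Longrightarrow> \<exists>d. P = cut_decomp D d"
  using outside_decomposition.strips_eq_cut_decomp outside_decomposition.intro by blast

theorem theorem2p2:
  fixes la mu :: "nat list" and i :: int and P :: "box set set"
  assumes "is_partition la" and "is_partition mu" and "part_le mu la"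
    and "skew la mu \<noteq> {}"
    and "edge_connected (skew la mu)"
    and "Min (content ` skew la mu) \<le> i" and "i < Max (content ` skew la mu)"
    and "outside_decomp (skew la mu) P"
  shows "let P' = twist (skew la mu) i P in
    exactly_one
     [ i \<notin> Term P \<and> i + 1 \<notin> Init P \<and>
         Init P' = Init P \<union> {i + 1} \<and> Term P' = Term P \<union> {i},
       i \<in> Term P \<and> i + 1 \<in> Init P \<and>
         Init P' = Init P - {i + 1} \<and> Term P' = Term P - {i},
       i \<in> Term P \<and> i + 1 \<notin> Init P \<and>
         Init P' = Init P \<and> Term P' = Term P,
       i \<notin> Term P \<and> i + 1 \<in> Init P \<and>
         Init P' = Init P \<and> Term P' = Term P ]"
proof -
  define D where "D = skew la mu"
  define d where "d = (SOME d. P = cut_decomp D d)"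
  have D_convex: "box_convex D" and D_finite: "finite D"
    unfolding D_def using box_convex_skew assms(1,2) finite_skew by auto
  have "\<exists>d. P = cut_decomp D d"
    using outside_decomp_is_cut_decomp[OF D_convex D_finite] assms(8) unfolding D_def by blast
  then have P: "P = cut_decomp D d" unfolding d_def by (rule someI_ex)
  have twist: "twist D i P = cut_decomp D (d(i := \<not> d i))"
    unfolding twist_def d_def Let_def ..
  have level: "\<exists>b\<in>D. content b = i + 1"
    using edge_connected_content_range[OF D_finite] assms(4-7) unfolding D_def by simp
  show ?thesis
    unfolding Let_def D_def[symmetric] twist
  proof (rule exactly_one_twist_cases)
    show "Init (cut_decomp D (d(i := \<not> d i))) - {i + 1} = Init P - {i + 1}"
      unfolding P by (rule Init_cut_decomp_update[OF D_finite])
    show "Term (cut_decomp D (d(i := \<not> d i))) - {i} = Term P - {i}"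
      unfolding P by (rule Term_cut_decomp_update[OF D_finite])
    show "i \<in> Term (cut_decomp D (d(i := \<not> d i))) \<longleftrightarrow> i + 1 \<notin> Init P"
      unfolding P by (rule Term_cut_decomp_twist[OF D_convex D_finite level])
    show "i + 1 \<in> Init (cut_decomp D (d(i := \<not> d i))) \<longleftrightarrow> i \<notin> Term P"
      unfolding P by (rule Init_cut_decomp_twist[OF D_convex D_finite level])
  qed
qed

end
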